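(* Let $S_{\rm tr}, S_1,\dots,S_m$ be the output of Algorithm 1 (defined in the context) and set $\beta := \sum_{i=1}^m f_i(S_{\rm tr})$. If every $f_i$ is monotone and submodular, then $$\sum_{i=1}^m f_i(S_{\rm tr}\cup S_i)\;\ge\;\max\Bigl\{\beta,\;(1-1/e)(\mathrm{OPT}-2\beta)+\beta\Bigr\}.$$ Consequently $\sum_{i=1}^m f_i(S_{\rm tr}\cup S_i)\ge \tfrac12\,\mathrm{OPT}$ for every value of $\beta$.
   Context: $V$ is a finite ground set with $|V|=n$; $k,l$ are integers with $1\le l<k\le n$. For $i=1,\dots,m$, $f_i:2^V\to\mathbb{R}_{\ge 0}$ is a set function; $f_i$ is monotone if $A\subseteq B\Rightarrow f_i(A)\le f_i(B)$ and submodular if $f_i(A)+f_i(B)\ge f_i(A\cup B)+f_i(A\cap B)$ for all $A,B\subseteq V$. Write $\Delta_i(e\mid S)=f_i(S\cup\{e\})-f_i(S)$. Define $$\mathrm{OPT}=\max_{S_{\rm tr}\subseteq V,\,|S_{\rm tr}|\le l}\;\sum_{i=1}^m\;\max_{S_i\subseteq V,\,|S_i|\le k-l} f_i(S_{\rm tr}\cup S_i).$$ Algorithm 1: start with $S_{\rm tr}=S_1=\dots=S_m=\emptyset$. Phase 1: for $t=1,\dots,l$, choose $e^*\in\arg\max_{e\in V\setminus S_{\rm tr}}\sum_{i=1}^m\Delta_i(e\mid S_{\rm tr})$ and set $S_{\rm tr}\leftarrow S_{\rm tr}\cup\{e^*\}$. Phase 2: for $t=1,\dots,k-l$ and for each $i=1,\dots,m$,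 choose $e_i^*\in\arg\max_{e\in V\setminus(S_{\rm tr}\cup S_i)}\Delta_i(e\mid S_{\rm tr}\cup S_i)$ and set $S_i\leftarrow S_i\cup\{e_i^*\}$. Output $S_{\rm tr},S_1,\dots,S_m$. Ties in all argmax's are broken arbitrarily. *)

theory Defs
  imports Complex_Main
begin

definition monotone_on_subsets :: "'a set \<Rightarrow> ('a set \<Rightarrow> real) \<Rightarrow> bool" where
  "monotone_on_subsets V g \<longleftrightarrow> (\<forall>A B. A \<subseteq> B \<and> B \<subseteq> V \<longrightarrow> g A \<le> g B)"

definition submodular_on_subsets :: "'a set \<Rightarrow> ('a set \<Rightarrow> real) \<Rightarrow> bool" where
  "submodular_on_subsets V g \<longleftrightarrow>
     (\<forall>A B. A \<subseteq> V \<and> B \<subseteq> V \<longrightarrow> g A + g B \<ge> g (A \<union> B) + g (A \<inter> B))"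

text \<open>Ties are broken arbitrarily.\<close>
definition greedy_run :: "'a set \<Rightarrow> 'a set \<Rightarrow> ('a set \<Rightarrow> 'a \<Rightarrow> real) \<Rightarrow> 'a list \<Rightarrow> bool" where
  "greedy_run V B score xs \<longleftrightarrow>
     (\<forall>t < length xs.
        xs ! t \<in> V - (B \<union> set (take t xs)) \<and>
        (\<forall>e \<in> V - (B \<union> set (take t xs)).
            score (set (take t xs)) e \<le> score (set (take t xs)) (xs ! t)))"

definition OPT :: "'a set \<Rightarrow> nat \<Rightarrow> nat \<Rightarrow> nat \<Rightarrow> (nat \<Rightarrow> 'a set \<Rightarrow> real) \<Rightarrow> real" where
  "OPT V k l m f =
     Max ((\<lambda>T. \<Sum>i=1..m. Max ((\<lambda>S. f i (T \<union> S)) ` {S. S \<subseteq> V \<and> card S \<le> k - l}))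
          ` {T. T \<subseteq> V \<and> card T \<le> l})"

end

theory Submission
  imports Defs
begin

text \<open>Phase 1 is the classical greedy algorithm for the monotone submodular function
  F = f_1 + ... + f_m. Every element of an optimal shared part T that greedy missed has
  marginal gain, with respect to set tr, at most the smallest greedy gain, so these
  gains together are at most F(set tr) = \<beta>; by submodularity this gives
  OPT \<le> \<Sum>i. f_i(set tr \<union> S_i) + \<beta> for optimal personal parts S_i. Phase 2 runs the
  greedy algorithm for each f_i on top of set tr, which recovers a fraction 1 - 1/e of
  the remaining gap f_i(set tr \<union> S_i) - f_i(set tr). Both bounds combine to the claim,
  and since 1 - 1/e \<ge> 1/2 the maximum of the two lower bounds is at least OPT/2.\<close>

lemma monotone_on_subsets_sum:
  assumes "\<And>i. i \<in> I \<Longrightarrow> monotone_on_subsets V (f i)"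
  shows "monotone_on_subsets V (\<lambda>S. \<Sum>i\<in>I. f i S)"
  using assms unfolding monotone_on_subsets_def by (auto intro: sum_mono)

lemma submodular_on_subsets_sum:
  assumes "\<And>i. i \<in> I \<Longrightarrow> submodular_on_subsets V (f i)"
  shows "submodular_on_subsets V (\<lambda>S. \<Sum>i\<in>I. f i S)"
  using assms unfolding submodular_on_subsets_def
  by (auto simp flip: sum.distrib intro: sum_mono)

lemma monotone_on_subsetsD:
  "monotone_on_subsets V g \<Longrightarrow> A \<subseteq> B \<Longrightarrow> B \<subseteq> V \<Longrightarrow> g A \<le> g B"
  unfolding monotone_on_subsets_def by blast

lemma submodular_diminishing_returns:
  assumes mo: "monotone_on_subsets V g" and sm: "submodular_on_subsets V g"
    and AB: "A \<subseteq> B" "B \<subseteq> V" and e: "e \<in> V"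
  shows "g (B \<union> {e}) - g B \<le> g (A \<union> {e}) - g A"
proof (cases "e \<in> B")
  case True
  then have "B \<union> {e} = B" by auto
  moreover have "g A \<le> g (A \<union> {e})"
    using AB e by (intro monotone_on_subsetsD[OF mo]) auto
  ultimately show ?thesis by simp
next
  case False
  have "g (A \<union> {e}) + g B \<ge> g ((A \<union> {e}) \<union> B) + g ((A \<union> {e}) \<inter> B)"
    using sm AB e unfolding submodular_on_subsets_def by (meson Un_least empty_subsetI insert_subset order_trans)
  moreover have "(A \<union> {e}) \<inter> B = A" "(A \<union> {e}) \<union> B = B \<union> {e}" using False AB by auto
  ultimately show ?thesis by simp
qed

lemma submodular_le_sum_marginal_gains:
  assumes mo: "monotone_on_subsets V g" and sm: "submodular_on_subsets V g"
    and "finite X" and "A \<union> X \<subseteq> V"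
  shows "g (A \<union> X) \<le> g A + (\<Sum>e\<in>X. g (A \<union> {e}) - g A)"
  using assms(3,4)
proof (induction X rule: finite_induct)
  case empty
  then show ?case by simp
next
  case (insert x F)
  have "g ((A \<union> F) \<union> {x}) - g (A \<union> F) \<le> g (A \<union> {x}) - g A"
    using insert.prems by (intro submodular_diminishing_returns[OF mo sm]) auto
  moreover have "A \<union> insert x F = (A \<union> F) \<union> {x}" by auto
  ultimately show ?case using insert by simp
qed

lemma monotone_submodular_union_le:
  assumes mo: "monotone_on_subsets V g" and sm: "submodular_on_subsets V g"
    and "finite V" and "T \<subseteq> V" "R \<subseteq> V" "S \<subseteq> V"
  shows "g (T \<union> S) \<le> g (R \<union> S) + (\<Sum>e\<in>T - R. g (R \<union> {e}) - g R)"
proof -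
  have fin: "finite (T - R)" using assms finite_subset by blast
  have "g (T \<union> S) \<le> g ((R \<union> S) \<union> (T - R))"
    using assms by (intro monotone_on_subsetsD[OF mo]) auto
  also have "\<dots> \<le> g (R \<union> S) + (\<Sum>e\<in>T - R. g (R \<union> S \<union> {e}) - g (R \<union> S))"
    using assms by (intro submodular_le_sum_marginal_gains[OF mo sm fin]) auto
  also have "\<dots> \<le> g (R \<union> S) + (\<Sum>e\<in>T - R. g (R \<union> {e}) - g R)"
    using assms by (intro add_left_mono sum_mono submodular_diminishing_returns[OF mo sm]) auto
  finally show ?thesis .
qed

lemma greedy_run_set_subset:
  assumes "greedy_run V B score xs"
  shows "set xs \<subseteq> V - B"
proof
  fix x assume "x \<in> set xs"
  then obtain j where "j < length xs" "x = xs ! j" by (auto simp: in_set_conv_nth)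
  then show "x \<in> V - B" using assms unfolding greedy_run_def by auto
qed

lemma greedy_run_best_gain:
  assumes gr: "greedy_run V B (\<lambda>S e. g (B \<union> S \<union> {e}) - g (B \<union> S)) xs"
    and t: "t < length xs" and e: "e \<in> V - (B \<union> set (take t xs))"
  shows "g (B \<union> set (take t xs) \<union> {e}) - g (B \<union> set (take t xs))
     \<le> g (B \<union> set (take (Suc t) xs)) - g (B \<union> set (take t xs))"
proof -
  have "g (B \<union> set (take t xs) \<union> {e}) - g (B \<union> set (take t xs))
      \<le> g (B \<union> set (take t xs) \<union> {xs ! t}) - g (B \<union> set (take t xs))"
    using gr t e unfolding greedy_run_def by blast
  moreover have "B \<union> set (take (Suc t) xs) = B \<union> set (take t xs) \<union> {xs ! t}"
    using t by (auto simp: take_Suc_conv_app_nth)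
  ultimately show ?thesis by (simp only:)
qed

lemma greedy_run_gain_nonneg:
  assumes mo: "monotone_on_subsets V g" and BV: "B \<subseteq> V"
    and gr: "greedy_run V B score xs"
  shows "g (B \<union> set (take t xs)) \<le> g (B \<union> set (take (Suc t) xs))"
proof -
  have "set (take (Suc t) xs) \<subseteq> V"
    using greedy_run_set_subset[OF gr] by (meson Diff_subset order_trans set_take_subset)
  moreover have "set (take t xs) \<subseteq> set (take (Suc t) xs)"
    by (simp add: set_take_subset_set_take)
  ultimately show ?thesis using BV by (intro monotone_on_subsetsD[OF mo]) auto
qed

lemma greedy_run_step_bound:
  assumes mo: "monotone_on_subsets V g" and sm: "submodular_on_subsets V g"
    and finV: "finite V" and BV: "B \<subseteq> V"
    and gr: "greedy_run V B (\<lambda>S e. g (B \<union> S \<union> {e}) - g (B \<union> S)) xs"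
    and t: "t < length xs" and SV: "S \<subseteq> V" and cS: "card S \<le> r"
  shows "g (B \<union> S) - g (B \<union> set (take t xs))
     \<le> real r * (g (B \<union> set (take (Suc t) xs)) - g (B \<union> set (take t xs)))"
proof -
  define P where "P = B \<union> set (take t xs)"
  define D where "D = g (B \<union> set (take (Suc t) xs)) - g P"
  have PV: "P \<subseteq> V"
    using BV greedy_run_set_subset[OF gr] unfolding P_def
    by (meson Diff_subset Un_least order_trans set_take_subset)
  have D0: "D \<ge> 0" using greedy_run_gain_nonneg[OF mo BV gr] unfolding D_def P_def by simp
  have "g (B \<union> S) \<le> g (P \<union> (S - P))"
    using SV PV unfolding P_def by (intro monotone_on_subsetsD[OF mo]) auto
  also have "\<dots> \<le> g P + (\<Sum>e\<in>S - P. g (P \<union> {e}) - g P)"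
    using SV PV finV by (intro submodular_le_sum_marginal_gains[OF mo sm]) (auto intro: finite_subset)
  also have "\<dots> \<le> g P + (\<Sum>e\<in>S - P. D)"
    using SV t greedy_run_best_gain[OF gr] unfolding D_def P_def
    by (intro add_left_mono sum_mono) (auto simp: sup_assoc)
  also have "\<dots> \<le> g P + real r * D"
  proof -
    have "card (S - P) \<le> r" using cS SV finV by (meson Diff_subset card_mono finite_subset le_trans)
    then show ?thesis using D0 by (simp add: mult_right_mono)
  qed
  finally show ?thesis unfolding D_def P_def by simp
qed

lemma greedy_run_approximation:
  assumes mo: "monotone_on_subsets V g" and sm: "submodular_on_subsets V g"
    and finV: "finite V" and BV: "B \<subseteq> V"
    and gr: "greedy_run V B (\<lambda>S e. g (B \<union> S \<union> {e}) - g (B \<union> S)) xs"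
    and len: "length xs = r" and r: "r \<ge> 1" and SV: "S \<subseteq> V" and cS: "card S \<le> r"
  shows "g B + (1 - 1 / exp 1) * (g (B \<union> S) - g B) \<le> g (B \<union> set xs)"
proof -
  define gap where "gap t = g (B \<union> S) - g (B \<union> set (take t xs))" for t
  define q where "q = 1 - 1 / real r"
  have q: "0 \<le> q" "q ^ r \<le> exp (-1)"
    using r exp_ge_one_minus_x_over_n_power_n[of 1 r] unfolding q_def by auto
  have gap_Suc: "gap (Suc t) \<le> q * gap t" if "t < r" for t
  proof -
    have "gap t \<le> real r * (gap t - gap (Suc t))"
      using greedy_run_step_bound[OF mo sm finV BV gr _ SV cS, of t] that len
      unfolding gap_def by simp
    then have "gap t / real r \<le> gap t - gap (Suc t)"
      using r by (simp add: divide_le_eq mult.commute)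
    then show ?thesis unfolding q_def by (simp add: algebra_simps)
  qed
  have gap_pow: "gap t \<le> q ^ t * gap 0" if "t \<le> r" for t
    using that
  proof (induction t)
    case (Suc t)
    then have "gap (Suc t) \<le> q * (q ^ t * gap 0)"
      using gap_Suc q(1) by (meson Suc_le_lessD less_imp_le_nat mult_left_mono order_trans)
    then show ?case by simp
  qed simp
  have "gap 0 \<ge> 0" using SV BV unfolding gap_def by (simp add: monotone_on_subsetsD[OF mo])
  then have "gap r \<le> exp (-1) * gap 0"
    using gap_pow[of r] q(2) by (meson mult_right_mono order_refl order_trans)
  then show ?thesis using len unfolding gap_def by (simp add: exp_minus field_simps)
qed

lemma greedy_run_marginal_gains_le:
  assumes mo: "monotone_on_subsets V g" and sm: "submodular_on_subsets V g"
    and finV: "finite V" and BV: "B \<subseteq> V"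
    and gr: "greedy_run V B (\<lambda>S e. g (B \<union> S \<union> {e}) - g (B \<union> S)) xs"
    and TV: "T \<subseteq> V" and cT: "card T \<le> length xs"
  shows "(\<Sum>e\<in>T - (B \<union> set xs). g (B \<union> set xs \<union> {e}) - g (B \<union> set xs))
     \<le> g (B \<union> set xs) - g B"
proof -
  define r where "r = length xs"
  define R where "R = B \<union> set xs"
  define X where "X = T - R"
  define gain where "gain j = g (B \<union> set (take (Suc j) xs)) - g (B \<union> set (take j xs))" for j
  have RV: "R \<subseteq> V" using BV greedy_run_set_subset[OF gr] unfolding R_def by blast
  have cX: "card X \<le> r"
    using cT TV finV unfolding X_def r_def by (meson Diff_subset card_mono finite_subset le_trans)
  have X_le_gain: "(\<Sum>e\<in>X. g (R \<union> {e}) - g R) \<le> real r * gain j" if j: "j < r" for j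
  proof -
    have "(\<Sum>e\<in>X. g (R \<union> {e}) - g R) \<le> (\<Sum>e\<in>X. gain j)"
    proof (rule sum_mono)
      fix e assume e: "e \<in> X"
      have take_R: "B \<union> set (take j xs) \<subseteq> R" using set_take_subset[of j xs] unfolding R_def by blast
      have "g (R \<union> {e}) - g R \<le> g (B \<union> set (take j xs) \<union> {e}) - g (B \<union> set (take j xs))"
        using e TV RV take_R unfolding X_def
        by (intro submodular_diminishing_returns[OF mo sm]) auto
      also have "\<dots> \<le> gain j"
        using e TV take_R j unfolding X_def gain_def r_def
        by (intro greedy_run_best_gain[OF gr]) auto
      finally show "g (R \<union> {e}) - g R \<le> gain j" .
    qed
    also have "\<dots> \<le> real r * gain j"
      using cX greedy_run_gain_nonneg[OF mo BV gr] unfolding gain_def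
      by (simp add: mult_right_mono)
    finally show ?thesis .
  qed
  have telescope: "(\<Sum>j<r. gain j) = g R - g B"
    unfolding gain_def R_def r_def by (subst sum_lessThan_telescope) simp
  show ?thesis
  proof (cases "r = 0")
    case True
    then have "X = {}" "R = B"
      using cX TV finV unfolding X_def R_def r_def by (auto simp: finite_subset)
    then show ?thesis unfolding R_def[symmetric] X_def[symmetric] by simp
  next
    case False
    have "real r * (\<Sum>e\<in>X. g (R \<union> {e}) - g R) = (\<Sum>j<r. \<Sum>e\<in>X. g (R \<union> {e}) - g R)"
      by simp
    also have "\<dots> \<le> (\<Sum>j<r. real r * gain j)"
      by (rule sum_mono) (rule X_le_gain, simp)
    also have "\<dots> = real r * (g R - g B)"
      by (simp add: telescope flip: sum_distrib_left)
    finally have "real r * (\<Sum>e\<in>X. g (R \<union> {e}) - g R) \<le> real r * (g R - g B)" .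
    then show ?thesis using False unfolding X_def R_def by simp
  qed
qed

lemma greedy_phase1_bound:
  fixes f :: "nat \<Rightarrow> 'a set \<Rightarrow> real"
  assumes finV: "finite V"
    and nonneg: "\<And>i. i \<in> I \<Longrightarrow> 0 \<le> f i {}"
    and mono: "\<And>i. i \<in> I \<Longrightarrow> monotone_on_subsets V (f i)"
    and submod: "\<And>i. i \<in> I \<Longrightarrow> submodular_on_subsets V (f i)"
    and gr: "greedy_run V {} (\<lambda>S e. \<Sum>i\<in>I. f i (S \<union> {e}) - f i S) tr"
    and TV: "T \<subseteq> V" and cT: "card T \<le> length tr"
    and SV: "\<And>i. i \<in> I \<Longrightarrow> S i \<subseteq> V"
  shows "(\<Sum>i\<in>I. f i (T \<union> S i)) \<le> (\<Sum>i\<in>I. f i (set tr \<union> S i)) + (\<Sum>i\<in>I. f i (set tr))"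
proof -
  define F where "F S = (\<Sum>i\<in>I. f i S)" for S
  define R where "R = set tr"
  have moF: "monotone_on_subsets V F"
    unfolding F_def by (rule monotone_on_subsets_sum) (rule mono)
  have smF: "submodular_on_subsets V F"
    unfolding F_def by (rule submodular_on_subsets_sum) (rule submod)
  have grF: "greedy_run V {} (\<lambda>S e. F ({} \<union> S \<union> {e}) - F ({} \<union> S)) tr"
    using gr unfolding F_def by (simp add: sum_subtractf)
  have RV: "R \<subseteq> V" using greedy_run_set_subset[OF gr] unfolding R_def by blast
  have "(\<Sum>i\<in>I. f i (T \<union> S i)) \<le> (\<Sum>i\<in>I. f i (R \<union> S i) + (\<Sum>e\<in>T - R. f i (R \<union> {e}) - f i R))"
  proof (rule sum_mono)
    fix i assume "i \<in> I"
    then show "f i (T \<union> S i) \<le> f i (R \<union> S i) + (\<Sum>e\<in>T - R. f i (R \<union> {e}) - f i R)"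
      using TV RV SV by (intro monotone_submodular_union_le[OF mono submod finV]) auto
  qed
  also have "\<dots> = (\<Sum>i\<in>I. f i (R \<union> S i)) + (\<Sum>e\<in>T - R. F (R \<union> {e}) - F R)"
    unfolding F_def by (simp add: sum.distrib sum_subtractf sum.swap[of _ "T - R"] sum_distrib_left)
  also have "(\<Sum>e\<in>T - R. F (R \<union> {e}) - F R) \<le> F R"
  proof -
    have "0 \<le> F {}" unfolding F_def by (simp add: nonneg sum_nonneg)
    then show ?thesis
      using greedy_run_marginal_gains_le[OF moF smF finV _ grF TV cT] unfolding R_def by simp
  qed
  finally show ?thesis unfolding F_def R_def by simp
qed

lemma greedy_phase2_bound:
  fixes f :: "nat \<Rightarrow> 'a set \<Rightarrow> real"
  assumes finV: "finite V" and RV: "R \<subseteq> V"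
    and mono: "\<And>i. i \<in> I \<Longrightarrow> monotone_on_subsets V (f i)"
    and submod: "\<And>i. i \<in> I \<Longrightarrow> submodular_on_subsets V (f i)"
    and gr: "\<And>i. i \<in> I \<Longrightarrow> greedy_run V R (\<lambda>S e. f i (R \<union> S \<union> {e}) - f i (R \<union> S)) (ps i)"
    and len: "\<And>i. i \<in> I \<Longrightarrow> length (ps i) = r" and r: "r \<ge> 1"
    and SV: "\<And>i. S i \<subseteq> V" and cS: "\<And>i. card (S i) \<le> r"
  shows "(\<Sum>i\<in>I. f i R) + (1 - 1 / exp 1) * ((\<Sum>i\<in>I. f i (R \<union> S i)) - (\<Sum>i\<in>I. f i R))
     \<le> (\<Sum>i\<in>I. f i (R \<union> set (ps i)))"
proof -
  have "(\<Sum>i\<in>I. f i R + (1 - 1 / exp 1) * (f i (R \<union> S i) - f i R))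
      \<le> (\<Sum>i\<in>I. f i (R \<union> set (ps i)))"
    using r SV cS
    by (intro sum_mono greedy_run_approximation[OF mono submod finV RV gr len]) auto
  then show ?thesis by (simp add: sum.distrib sum_subtractf flip: sum_distrib_left)
qed

lemma OPT_attained:
  assumes "finite V"
  obtains T S where "T \<subseteq> V" "card T \<le> l" "\<And>i. S i \<subseteq> V" "\<And>i. card (S i) \<le> k - l"
    and "OPT V k l m f = (\<Sum>i=1..m. f i (T \<union> S i))"
proof -
  let ?TT = "{T. T \<subseteq> V \<and> card T \<le> l}" and ?SS = "{S. S \<subseteq> V \<and> card S \<le> k - l}"
  have fin: "finite ?TT" "finite ?SS" using assms by (simp_all add: finite_Collect_subsets)
  have ne: "?TT \<noteq> {}" "?SS \<noteq> {}" by auto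
  define opt_with where "opt_with T = (\<Sum>i=1..m. Max ((\<lambda>S. f i (T \<union> S)) ` ?SS))" for T
  obtain T where T: "T \<in> ?TT" "Max (opt_with ` ?TT) = opt_with T"
    using obtains_MAX[OF fin(1) ne(1)] .
  have "\<forall>i. \<exists>S. S \<in> ?SS \<and> Max ((\<lambda>S. f i (T \<union> S)) ` ?SS) = f i (T \<union> S)"
  proof
    fix i
    obtain S where "S \<in> ?SS" "Max ((\<lambda>S. f i (T \<union> S)) ` ?SS) = f i (T \<union> S)"
      using obtains_MAX[OF fin(2) ne(2)] .
    then show "\<exists>S. S \<in> ?SS \<and> Max ((\<lambda>S. f i (T \<union> S)) ` ?SS) = f i (T \<union> S)" by blast
  qed
  from choice[OF this] obtain S
    where S: "\<And>i. S i \<in> ?SS" "\<And>i. Max ((\<lambda>S. f i (T \<union> S)) ` ?SS) = f i (T \<union> S i)"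
    by blast
  have "OPT V k l m f = (\<Sum>i=1..m. f i (T \<union> S i))"
    using T(2) unfolding OPT_def opt_with_def S(2) by simp
  then show thesis using T(1) S(1) by (intro that[of T S]) auto
qed

lemma ge_half_of_lower_bounds:
  fixes c W b r :: real
  assumes "1 / 2 \<le> c" "b \<le> r" "c * (W - 2 * b) + b \<le> r"
  shows "W / 2 \<le> r"
proof (cases "W / 2 \<le> b")
  case False
  then have "0 \<le> (c - 1 / 2) * (W - 2 * b)" using assms(1) by simp
  then show ?thesis using assms(3) by (simp add: algebra_simps)
qed (use assms(2) in simp)

theorem proposition1:
  fixes V :: "'a set" and n k l m :: nat and f :: "nat \<Rightarrow> 'a set \<Rightarrow> real"
    and tr :: "'a list" and ps :: "nat \<Rightarrow> 'a list"
  assumes finV: "finite V" and cardV: "card V = n"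
    and kl: "1 \<le> l" "l < k" "k \<le> n"
    and nonneg: "\<And>i S. i \<in> {1..m} \<Longrightarrow> S \<subseteq> V \<Longrightarrow> f i S \<ge> 0"
    and mono: "\<And>i. i \<in> {1..m} \<Longrightarrow> monotone_on_subsets V (f i)"
    and submod: "\<And>i. i \<in> {1..m} \<Longrightarrow> submodular_on_subsets V (f i)"
    and phase1: "length tr = l"
      "greedy_run V {} (\<lambda>S e. \<Sum>i=1..m. f i (S \<union> {e}) - f i S) tr"
    and phase2: "\<And>i. i \<in> {1..m} \<Longrightarrow> length (ps i) = k - l"
      "\<And>i. i \<in> {1..m} \<Longrightarrow>
         greedy_run V (set tr) (\<lambda>S e. f i (set tr \<union> S \<union> {e}) - f i (set tr \<union> S)) (ps i)"
  defines "\<beta> \<equiv> \<Sum>i=1..m. f i (set tr)"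
  shows "(\<Sum>i=1..m. f i (set tr \<union> set (ps i)))
           \<ge> max \<beta> ((1 - 1 / exp 1) * (OPT V k l m f - 2 * \<beta>) + \<beta>)
       \<and> (\<Sum>i=1..m. f i (set tr \<union> set (ps i))) \<ge> OPT V k l m f / 2"
proof -
  let ?res = "\<Sum>i=1..m. f i (set tr \<union> set (ps i))"
  define c :: real where "c = 1 - 1 / exp 1"
  obtain T S where T: "T \<subseteq> V" "card T \<le> l" and S: "\<And>i. S i \<subseteq> V" "\<And>i. card (S i) \<le> k - l"
    and opt: "OPT V k l m f = (\<Sum>i=1..m. f i (T \<union> S i))"
    using OPT_attained[OF finV] by blast
  have trV: "set tr \<subseteq> V" using greedy_run_set_subset[OF phase1(2)] by blast
  have phase1_bound: "OPT V k l m f \<le> (\<Sum>i=1..m. f i (set tr \<union> S i)) + \<beta>"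
    unfolding opt \<beta>_def using T S phase1 nonneg
    by (intro greedy_phase1_bound[OF finV _ mono submod phase1(2)]) auto
  have phase2_bound: "\<beta> + c * ((\<Sum>i=1..m. f i (set tr \<union> S i)) - \<beta>) \<le> ?res"
    unfolding \<beta>_def c_def using kl S
    by (intro greedy_phase2_bound[OF finV trV mono submod phase2(2) phase2(1)]) auto
  have beta_le: "\<beta> \<le> ?res"
    unfolding \<beta>_def using trV greedy_run_set_subset[OF phase2(2)]
    by (intro sum_mono monotone_on_subsetsD[OF mono]) auto
  have c_ge_half: "1 / 2 \<le> c"
    using exp_ge_add_one_self[of 1] unfolding c_def by (simp add: field_simps)
  have "c * (OPT V k l m f - 2 * \<beta>) \<le> c * ((\<Sum>i=1..m. f i (set tr \<union> S i)) - \<beta>)"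
    using phase1_bound c_ge_half by (intro mult_left_mono) auto
  then have approx: "c * (OPT V k l m f - 2 * \<beta>) + \<beta> \<le> ?res"
    using phase2_bound by linarith
  have "OPT V k l m f / 2 \<le> ?res"
    using ge_half_of_lower_bounds[OF c_ge_half beta_le approx] .
  with beta_le approx show ?thesis unfolding c_def by simp
qed

end
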